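(* Let $M(C,\bar\xi,\pi)$ be a Myller configuration with Darboux frame $(\bar\xi,\bar\mu,\bar v)$ and invariants $G,K,T$ such that $(K(s),T(s))\neq(0,0)$ for all $s$, and let $\bar W_o$ be its unit OD-vector field. Then $C$ is a $W_o$-helix in $M$ if and only if $C$ is a $\bar v$-helix in $M$.
   Context: Let $C$ be a smooth curve in $E^3$ parametrized by arclength $s$; primes denote $d/ds$. A Myller configuration $M(C,\bar\xi,\pi)$ consists of a smooth unit vector field $\bar\xi$ along $C$ and a smooth oriented plane field $\pi$ with $\bar\xi\in\pi$; $\bar v$ is the unit normal of $\pi$, $\bar\mu=\bar v\times\bar\xi$, and $\bar\xi'=G\bar\mu+K\bar v$, $\bar\mu'=-G\bar\xi+T\bar v$, $\bar v'=-K\bar\xi-T\bar\mu$. The osculating-type Darboux vector (OD-vector) is $W_o=T\bar\xi-K\bar\mu$, $\bar W_o=W_o/\|W_o\|$. $C$ is a $W_o$-helix if $\langle\bar W_o,\bar l_o\rangle$ is constant for some constant unit vector $\bar l_o$; $C$ is a $\bar v$-helix if $\langle\bar v,\bar d_v\rangle$ is constant for some constant unit vector $\bar d_v$. *)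

theory Defs
  imports "HOL-Analysis.Analysis" "HOL-Analysis.Cross3"
begin

definition smooth_on :: "real set \<Rightarrow> (real \<Rightarrow> 'a::real_normed_vector) \<Rightarrow> bool" where
  "smooth_on S f \<longleftrightarrow> (\<exists>D :: nat \<Rightarrow> real \<Rightarrow> 'a. D 0 = f \<and>
      (\<forall>n. \<forall>t\<in>S. (D n has_vector_derivative D (Suc n) t) (at t)))"

text \<open>Myller configuration M(C, xi, pi) along a curve C (gamma) parametrized by arclength on the
  open interval I, with Darboux frame (xi, mu, v): v is the unit normal of the oriented plane field pi,
  xi a unit vector field in pi, mu = v x xi, and invariants G, K, T given by the derivative formulas.\<close>
definition myller_config ::
  "real set \<Rightarrow> (real \<Rightarrow> real^3) \<Rightarrow> (real \<Rightarrow> real^3) \<Rightarrow> (real \<Rightarrow> real^3) \<Rightarrow> (real \<Rightarrow> real^3)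
    \<Rightarrow> (real \<Rightarrow> real) \<Rightarrow> (real \<Rightarrow> real) \<Rightarrow> (real \<Rightarrow> real) \<Rightarrow> bool" where
  "myller_config I gamma xi mu v G K T \<longleftrightarrow>
     open I \<and> is_interval I \<and> I \<noteq> {} \<and>
     smooth_on I gamma \<and> smooth_on I xi \<and> smooth_on I v \<and>
     (\<forall>s\<in>I. norm (vector_derivative gamma (at s)) = 1) \<and>
     (\<forall>s\<in>I. norm (xi s) = 1 \<and> norm (v s) = 1 \<and> inner (xi s) (v s) = 0) \<and>
     (\<forall>s\<in>I. mu s = cross3 (v s) (xi s)) \<and>
     (\<forall>s\<in>I. (xi has_vector_derivative (G s *\<^sub>R mu s + K s *\<^sub>R v s)) (at s)) \<and>
     (\<forall>s\<in>I. (mu has_vector_derivative (- G s *\<^sub>R xi s + T s *\<^sub>R v s)) (at s)) \<and>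
     (\<forall>s\<in>I. (v has_vector_derivative (- K s *\<^sub>R xi s - T s *\<^sub>R mu s)) (at s))"

definition OD_vector :: "(real \<Rightarrow> real^3) \<Rightarrow> (real \<Rightarrow> real^3) \<Rightarrow> (real \<Rightarrow> real) \<Rightarrow> (real \<Rightarrow> real)
    \<Rightarrow> real \<Rightarrow> real^3" where
  "OD_vector xi mu K T s = T s *\<^sub>R xi s - K s *\<^sub>R mu s"

definition unit_OD_vector :: "(real \<Rightarrow> real^3) \<Rightarrow> (real \<Rightarrow> real^3) \<Rightarrow> (real \<Rightarrow> real) \<Rightarrow> (real \<Rightarrow> real)
    \<Rightarrow> real \<Rightarrow> real^3" where
  "unit_OD_vector xi mu K T s = (1 / norm (OD_vector xi mu K T s)) *\<^sub>R OD_vector xi mu K T s"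

definition helix_wrt :: "real set \<Rightarrow> (real \<Rightarrow> real^3) \<Rightarrow> bool" where
  "helix_wrt I X \<longleftrightarrow> (\<exists>l :: real^3. norm l = 1 \<and> (\<exists>c. \<forall>s\<in>I. inner (X s) l = c))"

end

theory Submission
  imports Defs
begin

(*
  Regard the unit normal v as a curve on the unit sphere; it is regular because
  v' = -K \<xi> - T \<mu> and (K, T) never vanishes. In its Sabban frame (v, t, v \<times> t),
  t = v'/|v'|, the third vector v \<times> t is exactly the unit OD-vector, and it satisfies
  (v \<times> t)' = -\<kappa>\<^sub>g v' with \<kappa>\<^sub>g the geodesic curvature.
  If \<langle>v, d\<rangle> is constant then v' \<perp> d, so \<langle>v \<times> t, d\<rangle> is constant.
  Conversely, if \<langle>v \<times> t, l\<rangle> = c then \<kappa>\<^sub>g \<langle>v', l\<rangle> = 0, and wherever \<kappa>\<^sub>g \<noteq> 0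
  the frame expansions of l and v'' give \<kappa>\<^sub>g\<^sup>2 = 1/c\<^sup>2 - 1. So the continuous
  function \<kappa>\<^sub>g\<^sup>2 takes at most two values and is constant on the interval: if it is 0,
  v \<times> t is a constant vector orthogonal to v; otherwise v' \<perp> l everywhere and
  \<langle>v, l\<rangle> is constant.
*)

unbundle cross3_syntax

lemma cross_cross:
  fixes a b c :: "real^3"
  shows "a \<times> (b \<times> c) = (a \<bullet> c) *\<^sub>R b - (a \<bullet> b) *\<^sub>R c"
  by (simp add: cross3_simps forall_3)

lemma cross_inner_swap:
  fixes a b c :: "real^3"
  shows "(a \<times> b) \<bullet> c = - ((a \<times> c) \<bullet> b)"
  by (simp add: cross3_simps forall_3)

lemma cross_frame_expansion:
  fixes a b x :: "real^3"
  assumes "a \<bullet> a = 1" "a \<bullet> b = 0"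
  shows "(b \<bullet> b) *\<^sub>R x
           = ((b \<bullet> b) * (x \<bullet> a)) *\<^sub>R a + (x \<bullet> b) *\<^sub>R b + (x \<bullet> (a \<times> b)) *\<^sub>R (a \<times> b)"
proof -
  have triple: "(c \<bullet> (d \<times> e)) *\<^sub>R x
      = (x \<bullet> c) *\<^sub>R (d \<times> e) + (x \<bullet> d) *\<^sub>R (e \<times> c) + (x \<bullet> e) *\<^sub>R (c \<times> d)"
    for c d e :: "real^3"
    by (simp add: cross3_simps forall_3)
  have "a \<bullet> (b \<times> (a \<times> b)) = b \<bullet> b"
    using assms by (simp add: cross_cross inner_commute)
  moreover have "b \<times> (a \<times> b) = (b \<bullet> b) *\<^sub>R a" "(a \<times> b) \<times> a = b"
    using assms by (simp_all add: cross_cross inner_commute cross_skew[of "a \<times> b"])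
  ultimately show ?thesis
    using triple[of a b "a \<times> b"] assms(1) by (simp add: mult.commute)
qed

lemma has_vector_derivative_sgn:
  fixes f :: "real \<Rightarrow> 'a::real_inner"
  assumes f': "(f has_vector_derivative f') (at t)" and nz: "f t \<noteq> 0"
  shows "((\<lambda>t. sgn (f t)) has_vector_derivative
           inverse (norm (f t)) *\<^sub>R (f' - (sgn (f t) \<bullet> f') *\<^sub>R sgn (f t))) (at t)"
proof -
  have "((\<lambda>t. norm (f t)) has_real_derivative sgn (f t) \<bullet> f') (at t)"
    using has_derivative_compose[OF f'[unfolded has_vector_derivative_def] has_derivative_norm[OF nz]]
    by (simp add: has_field_derivative_def inner_commute mult_commute_abs)
  then have "((\<lambda>t. inverse (norm (f t))) has_real_derivative
               - (sgn (f t) \<bullet> f') * inverse (norm (f t) ^ 2)) (at t)"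
    using nz by (auto intro!: derivative_eq_intros simp: power2_eq_square)
  from has_vector_derivative_scaleR[OF this f']
  show ?thesis
    using nz by (simp add: sgn_div_norm divide_inverse_commute scaleR_diff_right power2_eq_square ac_simps)
qed

lemma has_real_derivative_inner:
  fixes f g :: "real \<Rightarrow> 'a::real_inner"
  assumes "(f has_vector_derivative f') (at s)" "(g has_vector_derivative g') (at s)"
  shows "((\<lambda>t. f t \<bullet> g t) has_real_derivative f s \<bullet> g' + f' \<bullet> g s) (at s)"
  using bounded_bilinear.has_vector_derivative[OF bounded_bilinear_inner assms]
  by (simp add: has_real_derivative_iff_has_vector_derivative)

lemma has_vector_derivative_cross:
  fixes f g :: "real \<Rightarrow> real^3"
  assumes "(f has_vector_derivative f') (at s)" "(g has_vector_derivative g') (at s)"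
  shows "((\<lambda>t. f t \<times> g t) has_vector_derivative f s \<times> g' + f' \<times> g s) (at s)"
  using bounded_bilinear.has_vector_derivative[OF _ assms] bilinear_cross
  by (simp add: bilinear_conv_bounded_bilinear)

lemma has_real_derivative_locally_const:
  fixes f :: "real \<Rightarrow> real"
  assumes "open U" "s \<in> U" "\<And>t. t \<in> U \<Longrightarrow> f t = c" "(f has_real_derivative D) (at s)"
  shows "D = 0"
proof -
  have "((\<lambda>_. c) has_real_derivative D) (at s)"
    by (rule has_field_derivative_transform_within_open[OF assms(4,1,2)]) (use assms(3) in simp)
  then show ?thesis
    using DERIV_const DERIV_unique by blast
qed

lemma helix_wrt_cong:
  "(\<And>s. s \<in> I \<Longrightarrow> X s = Y s) \<Longrightarrow> helix_wrt I X \<longleftrightarrow> helix_wrt I Y"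
  unfolding helix_wrt_def by auto

locale spherical_curve =
  fixes I :: "real set" and v v' v'' :: "real \<Rightarrow> real^3"
  assumes open_I: "open I" and interval_I: "is_interval I" and nonempty_I: "I \<noteq> {}"
    and norm_v: "\<And>s. s \<in> I \<Longrightarrow> norm (v s) = 1"
    and v_deriv: "\<And>s. s \<in> I \<Longrightarrow> (v has_vector_derivative v' s) (at s)"
    and v'_deriv: "\<And>s. s \<in> I \<Longrightarrow> (v' has_vector_derivative v'' s) (at s)"
    and continuous_v'': "continuous_on I v''"
    and v'_nonzero: "\<And>s. s \<in> I \<Longrightarrow> v' s \<noteq> 0"
begin

definition sabban_normal :: "real \<Rightarrow> real^3" where
  "sabban_normal s = sgn (v s \<times> v' s)"

definition geodesic_curvature :: "real \<Rightarrow> real" where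
  "geodesic_curvature s = (v s \<times> v' s) \<bullet> v'' s / norm (v' s) ^ 3"

lemma inner_v_v: "s \<in> I \<Longrightarrow> v s \<bullet> v s = 1"
  using norm_v by (simp add: norm_eq_1)

lemma inner_v_v':
  assumes "s \<in> I" shows "v s \<bullet> v' s = 0"
proof -
  have "v s \<bullet> v' s + v' s \<bullet> v s = 0"
    using has_real_derivative_locally_const[of I s "\<lambda>t. v t \<bullet> v t"]
      has_real_derivative_inner[OF v_deriv v_deriv] open_I inner_v_v assms by blast
  then show ?thesis by (simp add: inner_commute)
qed

lemma inner_v_v'':
  assumes "s \<in> I" shows "v s \<bullet> v'' s = - (v' s \<bullet> v' s)"
  using has_real_derivative_locally_const[of I s "\<lambda>t. v t \<bullet> v' t"]
    has_real_derivative_inner[OF v_deriv v'_deriv] open_I inner_v_v' assms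
  by (force simp: inner_commute)

lemma norm_cross_v_v':
  assumes "s \<in> I" shows "norm (v s \<times> v' s) = norm (v' s)"
  using norm_cross_dot[of "v s" "v' s"] inner_v_v'[OF assms] norm_v[OF assms]
  by (simp add: power2_eq_iff_nonneg)

lemma frame_expansion:
  assumes "s \<in> I"
  shows "x = (x \<bullet> v s) *\<^sub>R v s + (x \<bullet> v' s / (v' s \<bullet> v' s)) *\<^sub>R v' s
           + (x \<bullet> sabban_normal s) *\<^sub>R sabban_normal s"
proof -
  have q: "v' s \<bullet> v' s \<noteq> 0" using v'_nonzero[OF assms] by simp
  have "(x \<bullet> sabban_normal s) *\<^sub>R sabban_normal s
      = (x \<bullet> (v s \<times> v' s) / (v' s \<bullet> v' s)) *\<^sub>R (v s \<times> v' s)"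
    using norm_cross_v_v'[OF assms]
    by (simp add: sabban_normal_def sgn_div_norm power2_norm_eq_inner[symmetric] power2_eq_square
        divide_inverse inverse_mult_distrib mult_ac)
  moreover have "x = inverse (v' s \<bullet> v' s) *\<^sub>R ((v' s \<bullet> v' s) *\<^sub>R x)"
    using q by simp
  ultimately show ?thesis
    unfolding cross_frame_expansion[OF inner_v_v[OF assms] inner_v_v'[OF assms], of x]
    using q by (simp add: scaleR_add_right divide_inverse_commute mult.assoc[symmetric])
qed

lemma inner_frame_expansion:
  assumes "s \<in> I"
  shows "x \<bullet> y = (x \<bullet> v s) * (v s \<bullet> y) + (x \<bullet> v' s) * (v' s \<bullet> y) / (v' s \<bullet> v' s)
           + (x \<bullet> sabban_normal s) * (sabban_normal s \<bullet> y)"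
  using arg_cong[where f = "\<lambda>z. z \<bullet> y", OF frame_expansion[OF assms, of x]]
  by (simp add: inner_add_left)

lemma cross_v_v'_nonzero:
  assumes "s \<in> I" shows "v s \<times> v' s \<noteq> 0"
  using norm_cross_v_v'[OF assms] v'_nonzero[OF assms] by auto

lemma norm_sabban_normal: "s \<in> I \<Longrightarrow> norm (sabban_normal s) = 1"
  using cross_v_v'_nonzero by (simp add: sabban_normal_def norm_sgn)

lemma inner_v_sabban_normal: "v s \<bullet> sabban_normal s = 0"
  by (simp add: sabban_normal_def sgn_div_norm dot_cross_self)

lemma sabban_normal_has_vector_derivative:
  assumes s: "s \<in> I"
  shows "(sabban_normal has_vector_derivative - geodesic_curvature s *\<^sub>R v' s) (at s)"
proof -
  let ?W' = "v s \<times> v'' s"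
  have "((\<lambda>t. v t \<times> v' t) has_vector_derivative ?W') (at s)"
    using has_vector_derivative_cross[OF v_deriv[OF s] v'_deriv[OF s]] by simp
  then have "(sabban_normal has_vector_derivative inverse (norm (v s \<times> v' s)) *\<^sub>R
               (?W' - (sabban_normal s \<bullet> ?W') *\<^sub>R sabban_normal s)) (at s)"
    unfolding sabban_normal_def[abs_def]
    by (rule has_vector_derivative_sgn) (rule cross_v_v'_nonzero[OF s])
  moreover have "?W' - (sabban_normal s \<bullet> ?W') *\<^sub>R sabban_normal s
      = - ((v s \<times> v' s) \<bullet> v'' s / (v' s \<bullet> v' s)) *\<^sub>R v' s"
  proof -
    have "?W' \<bullet> v s = 0"
      by (simp add: inner_commute dot_cross_self)
    moreover have "?W' \<bullet> v' s = - ((v s \<times> v' s) \<bullet> v'' s)"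
      by (rule cross_inner_swap)
    ultimately have "(?W' \<bullet> v s) *\<^sub>R v s + (?W' \<bullet> v' s / (v' s \<bullet> v' s)) *\<^sub>R v' s
        = - ((v s \<times> v' s) \<bullet> v'' s / (v' s \<bullet> v' s)) *\<^sub>R v' s"
      by simp
    with frame_expansion[OF s, of ?W'] show ?thesis
      by (metis add_diff_cancel_right' inner_commute)
  qed
  ultimately show ?thesis
    using norm_cross_v_v'[OF s]
    by (simp add: geodesic_curvature_def power2_norm_eq_inner[symmetric] power3_eq_cube
        power2_eq_square divide_inverse inverse_mult_distrib mult_ac)
qed

lemma continuous_on_geodesic_curvature: "continuous_on I geodesic_curvature"
proof -
  have "continuous_on I v" "continuous_on I v'"
    using v_deriv v'_deriv
    by (auto intro!: continuous_on_vector_derivative intro: has_vector_derivative_at_within)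
  then show ?thesis
    unfolding geodesic_curvature_def[abs_def]
    by (intro continuous_intros continuous_on_cross continuous_v'') (auto dest: v'_nonzero)
qed

lemma inner_sabban_normal_has_real_derivative:
  "s \<in> I \<Longrightarrow>
    ((\<lambda>t. sabban_normal t \<bullet> l) has_real_derivative - geodesic_curvature s * (v' s \<bullet> l)) (at s)"
  using has_real_derivative_inner[OF sabban_normal_has_vector_derivative has_vector_derivative_const]
  by simp

lemma convex_I: "convex I"
  using interval_I by (simp add: is_interval_convex)

lemma helix_sabban_normal_if_helix:
  assumes "helix_wrt I v" shows "helix_wrt I sabban_normal"
proof -
  obtain d c where d: "norm d = 1" and c: "\<And>s. s \<in> I \<Longrightarrow> v s \<bullet> d = c"
    using assms unfolding helix_wrt_def by blast
  have "v' s \<bullet> d = 0" if s: "s \<in> I" for s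
    using has_real_derivative_locally_const[of I s "\<lambda>t. v t \<bullet> d"]
      has_real_derivative_inner[OF v_deriv[OF s] has_vector_derivative_const] open_I c s
    by simp
  then have "((\<lambda>t. sabban_normal t \<bullet> d) has_real_derivative 0) (at s within I)" if "s \<in> I" for s
    using inner_sabban_normal_has_real_derivative[OF that, of d] that
    by (simp add: has_field_derivative_at_within)
  then have "\<exists>k. \<forall>s\<in>I. sabban_normal s \<bullet> d = k"
    by (rule has_field_derivative_zero_constant[OF convex_I])
  then show ?thesis
    unfolding helix_wrt_def using d by blast
qed

lemma geodesic_curvature_mult_inner_eq_0:
  assumes c: "\<And>s. s \<in> I \<Longrightarrow> sabban_normal s \<bullet> l = c" and s: "s \<in> I"
  shows "geodesic_curvature s * (v' s \<bullet> l) = 0"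
  using has_real_derivative_locally_const[OF open_I s c inner_sabban_normal_has_real_derivative[OF s]]
  by simp

lemma inner_v''_sabban_normal:
  assumes "s \<in> I"
  shows "v'' s \<bullet> sabban_normal s = geodesic_curvature s * (v' s \<bullet> v' s)"
proof -
  have "v'' s \<bullet> sabban_normal s = (v s \<times> v' s) \<bullet> v'' s / norm (v' s)"
    by (simp add: sabban_normal_def sgn_div_norm norm_cross_v_v'[OF assms] inner_commute
        divide_inverse_commute)
  also have "\<dots> = geodesic_curvature s * (v' s \<bullet> v' s)"
    using v'_nonzero[OF assms]
    by (simp add: geodesic_curvature_def dot_square_norm power3_eq_cube power2_eq_square)
  finally show ?thesis .
qed

lemma geodesic_curvature_sq_if_helix_sabban_normal:
  assumes l: "norm l = 1" and c: "\<And>s. s \<in> I \<Longrightarrow> sabban_normal s \<bullet> l = c"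
    and s: "s \<in> I" and nonzero: "geodesic_curvature s \<noteq> 0"
  shows "geodesic_curvature s ^ 2 = 1 / c ^ 2 - 1"
proof -
  define U where "U = I \<inter> geodesic_curvature -` (- {0})"
  have "open U"
    unfolding U_def
    by (rule continuous_open_preimage[OF continuous_on_geodesic_curvature open_I]) auto
  moreover have "s \<in> U"
    unfolding U_def using s nonzero by simp
  moreover have v'_l: "v' t \<bullet> l = 0" if "t \<in> U" for t
    using geodesic_curvature_mult_inner_eq_0[OF c] that unfolding U_def by auto
  ultimately have v''_l: "v'' s \<bullet> l = 0"
    using has_real_derivative_locally_const[of U s "\<lambda>t. v' t \<bullet> l"]
      has_real_derivative_inner[OF v'_deriv[OF s] has_vector_derivative_const]
    by simp
  have "1 = (v s \<bullet> l)\<^sup>2 + c\<^sup>2"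
    using inner_frame_expansion[OF s, of l l] l v'_l[OF \<open>s \<in> U\<close>] c[OF s]
    by (simp add: norm_eq_1 inner_commute power2_eq_square)
  moreover have "v s \<bullet> l = geodesic_curvature s * c"
  proof -
    have "0 = - (v' s \<bullet> v' s) * (v s \<bullet> l) + geodesic_curvature s * (v' s \<bullet> v' s) * c"
      using inner_frame_expansion[OF s, of "v'' s" l] v''_l v'_l[OF \<open>s \<in> U\<close>] c[OF s]
      by (simp add: inner_v''_sabban_normal[OF s] inner_v_v''[OF s] inner_commute)
    then show ?thesis
      using v'_nonzero[OF s] by (simp add: algebra_simps)
  qed
  ultimately have c_sq: "c\<^sup>2 * (1 + geodesic_curvature s ^ 2) = 1"
    by (simp add: power_mult_distrib algebra_simps)
  then have "c\<^sup>2 \<noteq> 0"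
    by auto
  with c_sq show ?thesis
    by (simp add: field_simps)
qed

lemma helix_if_helix_sabban_normal:
  assumes "helix_wrt I sabban_normal" shows "helix_wrt I v"
proof -
  obtain l c where l: "norm l = 1" and c: "\<And>s. s \<in> I \<Longrightarrow> sabban_normal s \<bullet> l = c"
    using assms unfolding helix_wrt_def by blast
  have "(\<lambda>s. geodesic_curvature s ^ 2) ` I \<subseteq> {0, 1 / c ^ 2 - 1}"
    using geodesic_curvature_sq_if_helix_sabban_normal[OF l c] by fastforce
  then have "(\<lambda>s. geodesic_curvature s ^ 2) constant_on I"
    by (intro continuous_finite_range_constant is_interval_connected interval_I
        continuous_intros continuous_on_geodesic_curvature) (auto intro: finite_subset)
  then obtain k where k: "\<And>s. s \<in> I \<Longrightarrow> geodesic_curvature s ^ 2 = k"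
    unfolding constant_on_def by blast
  show ?thesis
  proof (cases "k = 0")
    case True
    then have "(sabban_normal has_vector_derivative 0) (at s within I)" if "s \<in> I" for s
      using sabban_normal_has_vector_derivative[OF that] k[OF that]
      by (simp add: has_vector_derivative_at_within)
    then obtain d where d: "\<And>s. s \<in> I \<Longrightarrow> sabban_normal s = d"
      using has_vector_derivative_zero_constant[OF convex_I] by blast
    obtain s0 where "s0 \<in> I"
      using nonempty_I by blast
    then have "norm d = 1"
      using d norm_sabban_normal by metis
    moreover have "v s \<bullet> d = 0" if "s \<in> I" for s
      using d[OF that] inner_v_sabban_normal by metis
    ultimately show ?thesis
      unfolding helix_wrt_def by blast
  next
    case False
    then have "v' s \<bullet> l = 0" if "s \<in> I" for s
      using geodesic_curvature_mult_inner_eq_0[OF c that] k[OF that] by auto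
    then have "((\<lambda>t. v t \<bullet> l) has_real_derivative 0) (at s within I)" if "s \<in> I" for s
      using has_real_derivative_inner[OF v_deriv[OF that] has_vector_derivative_const, of l] that
      by (simp add: has_field_derivative_at_within)
    then have "\<exists>k. \<forall>s\<in>I. v s \<bullet> l = k"
      by (rule has_field_derivative_zero_constant[OF convex_I])
    then show ?thesis
      unfolding helix_wrt_def using l by blast
  qed
qed

lemma helix_sabban_normal_iff_helix: "helix_wrt I sabban_normal \<longleftrightarrow> helix_wrt I v"
  using helix_if_helix_sabban_normal helix_sabban_normal_if_helix by blast

end

lemma smooth_on_twice_differentiable:
  assumes "smooth_on I f"
  obtains f' f'' where "\<And>s. s \<in> I \<Longrightarrow> (f has_vector_derivative f' s) (at s)"
    and "\<And>s. s \<in> I \<Longrightarrow> (f' has_vector_derivative f'' s) (at s)"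
    and "continuous_on I f''"
proof -
  obtain D where D0: "D 0 = f"
    and D: "\<And>n s. s \<in> I \<Longrightarrow> (D n has_vector_derivative D (Suc n) s) (at s)"
    using assms unfolding smooth_on_def by blast
  have "continuous_on I (D 2)"
    using D[of _ 2]
    by (auto intro!: continuous_on_vector_derivative intro: has_vector_derivative_at_within)
  with D0 D[of _ 0] D[of _ 1] show ?thesis
    by (intro that[of "D 1" "D 2"]) (simp_all add: numeral_2_eq_2)
qed

lemma myller_cross_normal_derivative:
  assumes "myller_config I gamma xi mu v G K T" "s \<in> I"
  shows "v s \<times> (- K s *\<^sub>R xi s - T s *\<^sub>R mu s) = OD_vector xi mu K T s"
proof -
  have "mu s = v s \<times> xi s" "v s \<bullet> xi s = 0" "v s \<bullet> v s = 1"
    using assms unfolding myller_config_def by (auto simp: inner_commute norm_eq_1)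
  then show ?thesis
    by (simp add: OD_vector_def cross_cross Cross3.right_diff_distrib cross_mult_right)
qed

lemma myller_normal_derivative_nonzero:
  assumes "myller_config I gamma xi mu v G K T" "s \<in> I" "(K s, T s) \<noteq> (0, 0)"
  shows "- K s *\<^sub>R xi s - T s *\<^sub>R mu s \<noteq> 0"
proof -
  have "mu s = v s \<times> xi s" "v s \<bullet> xi s = 0" "norm (v s) = 1" "norm (xi s) = 1"
    using assms unfolding myller_config_def by (auto simp: inner_commute)
  then have "xi s \<bullet> mu s = 0" "mu s \<bullet> mu s = 1" "xi s \<bullet> xi s = 1"
    using norm_cross_dot[of "v s" "xi s"]
    by (simp_all add: dot_cross_self dot_square_norm)
  then have "(- K s *\<^sub>R xi s - T s *\<^sub>R mu s) \<bullet> (- K s *\<^sub>R xi s - T s *\<^sub>R mu s)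
      = K s ^ 2 + T s ^ 2"
    by (simp add: inner_diff_left inner_diff_right inner_commute power2_eq_square)
  with assms(3) show ?thesis
    by auto
qed

theorem theorem28:
  fixes I :: "real set" and gamma xi mu v :: "real \<Rightarrow> real^3" and G K T :: "real \<Rightarrow> real"
  assumes "myller_config I gamma xi mu v G K T"
    and "\<forall>s\<in>I. (K s, T s) \<noteq> (0, 0)"
  shows "helix_wrt I (unit_OD_vector xi mu K T) \<longleftrightarrow> helix_wrt I v"
proof -
  note M = assms(1)[unfolded myller_config_def]
  obtain v' v'' where v': "\<And>s. s \<in> I \<Longrightarrow> (v has_vector_derivative v' s) (at s)"
    and v'': "\<And>s. s \<in> I \<Longrightarrow> (v' has_vector_derivative v'' s) (at s)"
    and "continuous_on I v''"
    using smooth_on_twice_differentiable M by metis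
  have v'_eq: "v' s = - K s *\<^sub>R xi s - T s *\<^sub>R mu s" if "s \<in> I" for s
    using vector_derivative_unique_at v'[OF that] M that by blast
  interpret spherical_curve I v v' v''
    using M v' v'' \<open>continuous_on I v''\<close> v'_eq assms(2)
      myller_normal_derivative_nonzero[OF assms(1)]
    by unfold_locales auto
  have "unit_OD_vector xi mu K T s = sabban_normal s" if "s \<in> I" for s
    using myller_cross_normal_derivative[OF assms(1) that] v'_eq[OF that]
    by (simp add: unit_OD_vector_def sabban_normal_def sgn_div_norm divide_inverse_commute)
  then have "helix_wrt I (unit_OD_vector xi mu K T) \<longleftrightarrow> helix_wrt I sabban_normal"
    by (rule helix_wrt_cong)
  then show ?thesis
    using helix_sabban_normal_iff_helix by simp
qed

end
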